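(* Let $X$ be a compact metric space with metric $d$ and let $f\colon X\to X$ be a continuous map. If $f$ has the contractive shadowing property, then $f$ has the h-shadowing property.
   Context: For $\delta>0$, a sequence $(x_i)_{i\ge0}$ in $X$ is a $\delta$-pseudo orbit of $f$ if $d(f(x_i),x_{i+1})\le\delta$ for all $i\ge0$; it is $\epsilon$-shadowed by $x\in X$ if $d(f^i(x),x_i)\le\epsilon$ for all $i\ge0$. For $L>0$, $f$ has the $L$-Lipschitz shadowing property if there is $\delta_0>0$ such that for every $0<\delta\le\delta_0$, every $\delta$-pseudo orbit of $f$ is $L\delta$-shadowed by some point of $X$. $f$ has the contractive shadowing property if it has the $L$-Lipschitz shadowing property for some $0<L<1$. A finite sequence $(x_i)_{i=0}^k$ ($k\ge1$) is a $\delta$-chain of $f$ if $d(f(x_i),x_{i+1})\le\delta$ for $0\le i\le k-1$. $f$ has the h-shadowing property if for every $\epsilon>0$ there is $\delta>0$ such that for every $\delta$-chain $(x_i)_{i=0}^k$ of $f$ there is $x\in X$ with $d(f^i(x),x_i)\le\epsilon$ for all $0\le i\le k-1$ and $f^k(x)=x_k$. *)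

theory Defs
  imports "HOL-Analysis.Analysis"
begin

text \<open>Dynamics of a map f on a subset X of a metric space (X with the induced metric).\<close>

definition pseudo_orbit :: "'a::metric_space set \<Rightarrow> ('a \<Rightarrow> 'a) \<Rightarrow> real \<Rightarrow> (nat \<Rightarrow> 'a) \<Rightarrow> bool" where
  "pseudo_orbit X f \<delta> xs \<longleftrightarrow> (\<forall>i. xs i \<in> X) \<and> (\<forall>i. dist (f (xs i)) (xs (Suc i)) \<le> \<delta>)"

definition shadows :: "('a::metric_space \<Rightarrow> 'a) \<Rightarrow> real \<Rightarrow> 'a \<Rightarrow> (nat \<Rightarrow> 'a) \<Rightarrow> bool" where
  "shadows f \<epsilon> x xs \<longleftrightarrow> (\<forall>i. dist ((f ^^ i) x) (xs i) \<le> \<epsilon>)"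

definition lipschitz_shadowing :: "'a::metric_space set \<Rightarrow> ('a \<Rightarrow> 'a) \<Rightarrow> real \<Rightarrow> bool" where
  "lipschitz_shadowing X f L \<longleftrightarrow>
     (\<exists>\<delta>0>0. \<forall>\<delta>. 0 < \<delta> \<and> \<delta> \<le> \<delta>0 \<longrightarrow>
        (\<forall>xs. pseudo_orbit X f \<delta> xs \<longrightarrow> (\<exists>x\<in>X. shadows f (L * \<delta>) x xs)))"

definition contractive_shadowing :: "'a::metric_space set \<Rightarrow> ('a \<Rightarrow> 'a) \<Rightarrow> bool" where
  "contractive_shadowing X f \<longleftrightarrow> (\<exists>L. 0 < L \<and> L < 1 \<and> lipschitz_shadowing X f L)"

definition delta_chain :: "'a::metric_space set \<Rightarrow> ('a \<Rightarrow> 'a) \<Rightarrow> real \<Rightarrow> nat \<Rightarrow> (nat \<Rightarrow> 'a) \<Rightarrow> bool" where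
  "delta_chain X f \<delta> k xs \<longleftrightarrow> 1 \<le> k \<and> (\<forall>i\<le>k. xs i \<in> X) \<and>
     (\<forall>i<k. dist (f (xs i)) (xs (Suc i)) \<le> \<delta>)"

definition h_shadowing :: "'a::metric_space set \<Rightarrow> ('a \<Rightarrow> 'a) \<Rightarrow> bool" where
  "h_shadowing X f \<longleftrightarrow>
     (\<forall>\<epsilon>>0. \<exists>\<delta>>0. \<forall>k xs. delta_chain X f \<delta> k xs \<longrightarrow>
        (\<exists>x\<in>X. (\<forall>i<k. dist ((f ^^ i) x) (xs i) \<le> \<epsilon>) \<and> (f ^^ k) x = xs k))"

end

theory Submission
  imports Defs
begin

text \<open>
  Shadow a \<open>\<delta>\<close>-chain, continued by the true orbit of its endpoint, to within \<open>L\<delta>\<close>.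
  Among the points whose first \<open>k\<close> iterates stay close to the chain, take one minimising the
  endpoint error \<open>g y = d(f\<^sup>k y, x\<^sub>k)\<close>; this is possible by compactness. If \<open>g y > 0\<close>, the orbit
  of \<open>y\<close> followed by a jump to \<open>x\<^sub>k\<close> is a \<open>g y\<close>-pseudo orbit, and a point shadowing it has
  endpoint error at most \<open>L g y < g y\<close>. Measuring closeness by
  \<open>d(f\<^sup>i y, x\<^sub>i) + L/(1-L) \<cdot> g y\<close>, which this step does not increase, the new point is again
  admissible, contradicting minimality. Hence \<open>f\<^sup>k y = x\<^sub>k\<close>.
\<close>

lemma funpow_in_invariant_set:
  assumes "f ` X \<subseteq> X" "x \<in> X"
  shows "(f ^^ n) x \<in> X"
  using assms by (induction n) auto

lemma continuous_on_funpow: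
  assumes "continuous_on X f" "f ` X \<subseteq> X"
  shows "continuous_on X (f ^^ n)"
proof (induction n)
  case 0
  then show ?case by simp
next
  case (Suc n)
  have "(f ^^ n) ` X \<subseteq> X"
    using funpow_in_invariant_set[OF assms(2)] by blast
  then have "continuous_on X (f \<circ> (f ^^ n))"
    using continuous_on_compose[OF Suc] continuous_on_subset[OF assms(1)] by blast
  then show ?case by simp
qed

lemma compact_Collect_continuous_le:
  fixes h :: "'i \<Rightarrow> 'a::metric_space \<Rightarrow> real"
  assumes "compact X" and "\<And>i. i \<in> I \<Longrightarrow> continuous_on X (h i)"
  shows "compact {y \<in> X. \<forall>i\<in>I. h i y \<le> c i}"
proof -
  have "closed X"
    using assms(1) by (rule compact_imp_closed)
  then have "closed (X \<inter> h i -` {..c i})" if "i \<in> I" for i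
    using continuous_closed_preimage[OF assms(2)[OF that]] by blast
  then have "closed (\<Inter>i\<in>I. X \<inter> h i -` {..c i})"
    by blast
  moreover have "{y \<in> X. \<forall>i\<in>I. h i y \<le> c i} = X \<inter> (\<Inter>i\<in>I. X \<inter> h i -` {..c i})"
    by auto
  ultimately show ?thesis
    using compact_Int_closed[OF assms(1)] by simp
qed

definition extend_by_orbit :: "('a \<Rightarrow> 'a) \<Rightarrow> nat \<Rightarrow> (nat \<Rightarrow> 'a) \<Rightarrow> nat \<Rightarrow> 'a" where
  "extend_by_orbit f k xs i = (if i \<le> k then xs i else (f ^^ (i - k)) (xs k))"

lemma pseudo_orbit_extend_by_orbit:
  assumes "f ` X \<subseteq> X" "0 \<le> \<delta>"
    and "\<And>i. i \<le> k \<Longrightarrow> xs i \<in> X"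
    and "\<And>i. i < k \<Longrightarrow> dist (f (xs i)) (xs (Suc i)) \<le> \<delta>"
  shows "pseudo_orbit X f \<delta> (extend_by_orbit f k xs)"
  unfolding pseudo_orbit_def
proof (intro conjI allI)
  fix i
  show "extend_by_orbit f k xs i \<in> X"
    using assms(3) funpow_in_invariant_set[OF assms(1)] by (simp add: extend_by_orbit_def)
  show "dist (f (extend_by_orbit f k xs i)) (extend_by_orbit f k xs (Suc i)) \<le> \<delta>"
  proof (cases "i < k")
    case True
    then show ?thesis using assms(4) by (simp add: extend_by_orbit_def)
  next
    case False
    then have "Suc i - k = Suc (i - k)" by simp
    with False have "f (extend_by_orbit f k xs i) = extend_by_orbit f k xs (Suc i)"
      by (cases "i = k") (auto simp: extend_by_orbit_def)
    then show ?thesis using assms(2) by simp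
  qed
qed

locale lipschitz_shadowing_map =
  fixes X :: "'a::metric_space set" and f :: "'a \<Rightarrow> 'a" and L \<delta>0 :: real
  assumes maps_into: "f ` X \<subseteq> X" and \<delta>0_pos: "0 < \<delta>0"
    and shadows_pseudo_orbit:
      "\<And>\<delta> xs. 0 < \<delta> \<Longrightarrow> \<delta> \<le> \<delta>0 \<Longrightarrow> pseudo_orbit X f \<delta> xs \<Longrightarrow> \<exists>x\<in>X. shadows f (L * \<delta>) x xs"
begin

lemma shadows_finite_chain:
  assumes "0 < \<delta>" "\<delta> \<le> \<delta>0"
    and "\<And>i. i \<le> k \<Longrightarrow> xs i \<in> X"
    and "\<And>i. i < k \<Longrightarrow> dist (f (xs i)) (xs (Suc i)) \<le> \<delta>"
  shows "\<exists>x\<in>X. \<forall>i\<le>k. dist ((f ^^ i) x) (xs i) \<le> L * \<delta>"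
proof -
  have "pseudo_orbit X f \<delta> (extend_by_orbit f k xs)"
    using assms by (intro pseudo_orbit_extend_by_orbit maps_into) auto
  then obtain x where "x \<in> X" and x: "shadows f (L * \<delta>) x (extend_by_orbit f k xs)"
    using shadows_pseudo_orbit assms(1,2) by blast
  have "dist ((f ^^ i) x) (xs i) \<le> L * \<delta>" if "i \<le> k" for i
    using x that unfolding shadows_def by (metis extend_by_orbit_def)
  then show ?thesis
    using \<open>x \<in> X\<close> by blast
qed

lemma endpoint_error_contracts:
  assumes "y \<in> X" "z \<in> X"
    and pos: "0 < dist ((f ^^ k) y) z" and small: "dist ((f ^^ k) y) z \<le> \<delta>0"
  obtains y' where "y' \<in> X"
    and "dist ((f ^^ k) y') z \<le> L * dist ((f ^^ k) y) z"
    and "\<And>i. i < k \<Longrightarrow> dist ((f ^^ i) y') ((f ^^ i) y) \<le> L * dist ((f ^^ k) y) z"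
proof -
  define \<eta> where "\<eta> = dist ((f ^^ k) y) z"
  define ys where "ys i = (if i < k then (f ^^ i) y else z)" for i
  have "\<exists>y'\<in>X. \<forall>i\<le>k. dist ((f ^^ i) y') (ys i) \<le> L * \<eta>"
  proof (rule shadows_finite_chain)
    show "0 < \<eta>" "\<eta> \<le> \<delta>0"
      using pos small by (simp_all add: \<eta>_def)
    show "ys i \<in> X" for i
      using assms(1,2) funpow_in_invariant_set[OF maps_into] by (simp add: ys_def)
    show "dist (f (ys i)) (ys (Suc i)) \<le> \<eta>" if "i < k" for i
      using that pos by (cases "Suc i = k") (auto simp: ys_def \<eta>_def)
  qed
  then obtain y' where "y' \<in> X" and y': "\<And>i. i \<le> k \<Longrightarrow> dist ((f ^^ i) y') (ys i) \<le> L * \<eta>"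
    by blast
  show ?thesis
  proof (rule that[OF \<open>y' \<in> X\<close>])
    show "dist ((f ^^ k) y') z \<le> L * dist ((f ^^ k) y) z"
      using y'[of k] by (simp add: ys_def \<eta>_def)
    show "dist ((f ^^ i) y') ((f ^^ i) y) \<le> L * dist ((f ^^ k) y) z" if "i < k" for i
      using y'[of i] that by (simp add: ys_def \<eta>_def)
  qed
qed

end

locale contractive_shadowing_map = lipschitz_shadowing_map +
  assumes compact: "compact X"
    and continuous: "continuous_on X f"
    and L_pos: "0 < L" and L_less_1: "L < 1"
begin

definition admissible :: "nat \<Rightarrow> (nat \<Rightarrow> 'a) \<Rightarrow> real \<Rightarrow> 'a set" where
  "admissible k xs c =
     {y \<in> X. \<forall>i<k. dist ((f ^^ i) y) (xs i) + L / (1 - L) * dist ((f ^^ k) y) (xs k) \<le> c}"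

lemma compact_admissible: "compact (admissible k xs c)"
proof -
  define h where "h i y = dist ((f ^^ i) y) (xs i) + L / (1 - L) * dist ((f ^^ k) y) (xs k)" for i y
  have "continuous_on X (h i)" for i
    unfolding h_def by (intro continuous_intros continuous_on_funpow continuous maps_into)
  then have "compact {y \<in> X. \<forall>i\<in>{..<k}. h i y \<le> c}"
    by (intro compact_Collect_continuous_le compact)
  then show ?thesis
    by (simp add: admissible_def h_def Ball_def)
qed

lemma shadowing_point_admissible:
  assumes "y \<in> X" and "\<And>i. i \<le> k \<Longrightarrow> dist ((f ^^ i) y) (xs i) \<le> L * \<delta>"
  shows "y \<in> admissible k xs (L / (1 - L) * \<delta>)"
proof -
  define a where "a = L / (1 - L)"
  have "0 \<le> a" "L * \<delta> + a * (L * \<delta>) = a * \<delta>"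
    using L_pos L_less_1 by (simp_all add: a_def field_simps)
  moreover have "a * dist ((f ^^ k) y) (xs k) \<le> a * (L * \<delta>)"
    using assms(2)[of k] \<open>0 \<le> a\<close> by (simp add: mult_left_mono)
  ultimately have "dist ((f ^^ i) y) (xs i) + a * dist ((f ^^ k) y) (xs k) \<le> a * \<delta>" if "i < k" for i
    using assms(2)[OF less_imp_le[OF that]] by linarith
  with \<open>y \<in> X\<close> show ?thesis
    by (simp add: admissible_def a_def)
qed

text \<open>The weight \<open>a = L/(1-L)\<close> solves \<open>L + a L = a\<close>: the shift by \<open>L g\<close> of the first \<open>k\<close>
  iterates is paid for exactly by the gain \<open>(1 - L) g\<close> in endpoint error.\<close>
lemma admissible_endpoint_error_decreases:
  assumes "y \<in> admissible k xs c" "xs k \<in> X"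
    and "0 < dist ((f ^^ k) y) (xs k)" "dist ((f ^^ k) y) (xs k) \<le> \<delta>0"
  obtains y' where "y' \<in> admissible k xs c"
    and "dist ((f ^^ k) y') (xs k) \<le> L * dist ((f ^^ k) y) (xs k)"
proof -
  define a where "a = L / (1 - L)"
  have "0 \<le> a" and a_fixed: "L * t + a * (L * t) = a * t" for t
    using L_pos L_less_1 by (simp_all add: a_def field_simps)
  define g where "g y = dist ((f ^^ k) y) (xs k)" for y
  have "y \<in> X" and y_adm: "\<And>i. i < k \<Longrightarrow> dist ((f ^^ i) y) (xs i) + a * g y \<le> c"
    using assms(1) by (simp_all add: admissible_def a_def g_def)
  obtain y' where "y' \<in> X" and g_y': "g y' \<le> L * g y"
    and near: "\<And>i. i < k \<Longrightarrow> dist ((f ^^ i) y') ((f ^^ i) y) \<le> L * g y"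
    using endpoint_error_contracts[OF \<open>y \<in> X\<close> assms(2-4)] unfolding g_def by blast
  have "dist ((f ^^ i) y') (xs i) + a * g y' \<le> c" if "i < k" for i
  proof -
    have "dist ((f ^^ i) y') (xs i) + a * g y'
        \<le> dist ((f ^^ i) y) (xs i) + L * g y + a * (L * g y)"
      using dist_triangle[of "(f ^^ i) y'" "xs i" "(f ^^ i) y"] near[OF that]
        mult_left_mono[OF g_y' \<open>0 \<le> a\<close>] by linarith
    also have "\<dots> = dist ((f ^^ i) y) (xs i) + a * g y"
      using a_fixed[of "g y"] by simp
    also have "\<dots> \<le> c"
      using y_adm[OF that] .
    finally show ?thesis .
  qed
  with \<open>y' \<in> X\<close> have "y' \<in> admissible k xs c"
    by (simp add: admissible_def a_def g_def)
  with g_y' show ?thesis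
    using that unfolding g_def by blast
qed

lemma chain_shadowing_hitting_endpoint:
  assumes chain: "delta_chain X f \<delta> k xs" and \<delta>: "0 < \<delta>" "\<delta> \<le> \<delta>0"
  obtains x where "x \<in> X" "\<And>i. i < k \<Longrightarrow> dist ((f ^^ i) x) (xs i) \<le> L / (1 - L) * \<delta>"
    and "(f ^^ k) x = xs k"
proof -
  define a where "a = L / (1 - L)"
  define g where "g y = dist ((f ^^ k) y) (xs k)" for y
  define K where "K = admissible k xs (a * \<delta>)"
  have xs: "\<And>i. i \<le> k \<Longrightarrow> xs i \<in> X" "\<And>i. i < k \<Longrightarrow> dist (f (xs i)) (xs (Suc i)) \<le> \<delta>"
    using chain by (auto simp: delta_chain_def)
  obtain y0 where "y0 \<in> X" and y0: "\<And>i. i \<le> k \<Longrightarrow> dist ((f ^^ i) y0) (xs i) \<le> L * \<delta>"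
    using shadows_finite_chain[of \<delta> k xs] \<delta> xs by blast
  have "y0 \<in> K"
    unfolding K_def a_def using \<open>y0 \<in> X\<close> y0 by (rule shadowing_point_admissible)
  moreover have "continuous_on K g"
  proof (rule continuous_on_subset)
    show "continuous_on X g"
      unfolding g_def by (intro continuous_intros continuous_on_funpow continuous maps_into)
    show "K \<subseteq> X"
      by (auto simp: K_def admissible_def)
  qed
  moreover have "compact K"
    unfolding K_def by (rule compact_admissible)
  ultimately obtain y where "y \<in> K" and y_min: "\<And>z. z \<in> K \<Longrightarrow> g y \<le> g z"
    using continuous_attains_inf[of K g] by blast
  have "L * \<delta> \<le> \<delta>"
    using L_less_1 \<delta>(1) by simp
  have "g y = 0"
  proof (rule ccontr)
    assume "g y \<noteq> 0"
    then have "0 < g y" by (simp add: g_def)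
    moreover have "g y \<le> \<delta>0"
      using y_min[OF \<open>y0 \<in> K\<close>] y0[of k] \<open>L * \<delta> \<le> \<delta>\<close> \<delta>(2) by (simp add: g_def)
    ultimately obtain y' where "y' \<in> K" and "g y' \<le> L * g y"
      using admissible_endpoint_error_decreases[of y k xs "a * \<delta>"] \<open>y \<in> K\<close> xs(1)[OF order_refl]
      unfolding K_def g_def by blast
    then have "g y \<le> L * g y"
      using y_min by (meson order.trans)
    with \<open>0 < g y\<close> L_less_1 show False
      by (simp add: mult_le_cancel_right1)
  qed
  show ?thesis
  proof (rule that)
    show "y \<in> X" "(f ^^ k) y = xs k"
      using \<open>y \<in> K\<close> \<open>g y = 0\<close> by (simp_all add: K_def admissible_def g_def)
    show "dist ((f ^^ i) y) (xs i) \<le> L / (1 - L) * \<delta>" if "i < k" for i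
      using \<open>y \<in> K\<close> \<open>g y = 0\<close> that by (simp add: K_def admissible_def a_def g_def)
  qed
qed

lemma h_shadowing: "h_shadowing X f"
  unfolding h_shadowing_def
proof (intro allI impI)
  fix \<epsilon> :: real
  assume "0 < \<epsilon>"
  define \<delta> where "\<delta> = min \<delta>0 ((1 - L) * \<epsilon>)"
  have "0 < \<delta>" "\<delta> \<le> \<delta>0"
    using \<open>0 < \<epsilon>\<close> L_less_1 \<delta>0_pos by (simp_all add: \<delta>_def)
  have "L / (1 - L) * \<delta> \<le> L / (1 - L) * ((1 - L) * \<epsilon>)"
    using L_pos L_less_1 by (intro mult_left_mono) (simp_all add: \<delta>_def)
  also have "\<dots> \<le> \<epsilon>"
    using \<open>0 < \<epsilon>\<close> L_less_1 by simp
  finally have "L / (1 - L) * \<delta> \<le> \<epsilon>" .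
  have "\<exists>x\<in>X. (\<forall>i<k. dist ((f ^^ i) x) (xs i) \<le> \<epsilon>) \<and> (f ^^ k) x = xs k"
    if chain: "delta_chain X f \<delta> k xs" for k xs
  proof -
    obtain x where "x \<in> X" "\<And>i. i < k \<Longrightarrow> dist ((f ^^ i) x) (xs i) \<le> L / (1 - L) * \<delta>"
      and "(f ^^ k) x = xs k"
      using chain_shadowing_hitting_endpoint[OF chain \<open>0 < \<delta>\<close> \<open>\<delta> \<le> \<delta>0\<close>] by blast
    with \<open>L / (1 - L) * \<delta> \<le> \<epsilon>\<close> show ?thesis
      by force
  qed
  with \<open>0 < \<delta>\<close> show "\<exists>\<delta>>0. \<forall>k xs. delta_chain X f \<delta> k xs \<longrightarrow>
      (\<exists>x\<in>X. (\<forall>i<k. dist ((f ^^ i) x) (xs i) \<le> \<epsilon>) \<and> (f ^^ k) x = xs k)"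
    by blast
qed

end

theorem theorem1p1:
  fixes X :: "'a::metric_space set" and f :: "'a \<Rightarrow> 'a"
  assumes "compact X"
    and "continuous_on X f"
    and "f ` X \<subseteq> X"
    and "contractive_shadowing X f"
  shows "h_shadowing X f"
proof -
  obtain L \<delta>0 where "0 < L" "L < 1" "0 < \<delta>0"
    and "\<And>\<delta> xs. 0 < \<delta> \<Longrightarrow> \<delta> \<le> \<delta>0 \<Longrightarrow> pseudo_orbit X f \<delta> xs \<Longrightarrow> \<exists>x\<in>X. shadows f (L * \<delta>) x xs"
    using assms(4) unfolding contractive_shadowing_def lipschitz_shadowing_def by blast
  then interpret contractive_shadowing_map X f L \<delta>0
    using assms(1-3) by unfold_locales auto
  show ?thesis
    by (rule h_shadowing)
qed

end
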